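(* For $n\ge0$ define $$\mathbb{P}_\infty^{(n)}:=\int_0^\infty\left[1-\Gamma\!\left(\frac{1}{2(1-\beta)},\frac{x_0^{2(1-\beta)}}{2r(1-\beta)^2}\right)\right]\frac{y_0}{\nu r^{3/2}\sqrt{2\pi}}\sum_{k=0}^n\frac{1}{k!}\left(-\frac{y_0^2}{2\nu^2r}\right)^k\mathrm{d}r,$$ and $$b_n:=\frac{2y_0(1-\beta)}{\Gamma\!\left(\frac{1}{2(1-\beta)}\right)\nu\sqrt{\pi}x_0^{1-\beta}}\left(\frac{y_0^2(1-\beta)^2}{\nu^2x_0^{2(1-\beta)}}\right)^n\frac{\Gamma\!\left(n+1+\frac{\beta}{2-2\beta}\right)}{n!(1+2n)}.$$ Then these integrals are finite, $\mathbb{P}_\infty^{(n)}=\sum_{k=0}^n(-1)^kb_k$, and $|\mathbb{P}_\infty-\mathbb{P}_\infty^{(n)}|\le b_{n+1}$ for every $n\ge0$. In particular $$\mathbb{P}_\infty^{(0)}=\frac{2\Gamma\!\left(1+\frac{\beta}{2-2\beta}\right)}{\Gamma\!\left(\frac{1}{2-2\beta}\right)}\frac{y_0(1-\beta)}{\nu\sqrt{\pi}x_0^{1-\beta}}.$$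
   Context: Parameters $x_0,y_0,\nu>0$, $\beta\in[0,1)$. $\Gamma(v,x):=\Gamma(v)^{-1}\int_0^xu^{v-1}e^{-u}\,\mathrm{d}u$ is the normalised lower incomplete Gamma function, $\Gamma(\cdot)$ the Euler Gamma function. $\mathbb{P}_\infty:=\frac{y_0}{\nu\sqrt{2\pi}}\int_0^\infty\left[1-\Gamma\!\left(\frac{1}{2(1-\beta)},\frac{x_0^{2(1-\beta)}}{2r(1-\beta)^2}\right)\right]r^{-3/2}\exp\!\left(-\frac{y_0^2}{2\nu^2r}\right)\mathrm{d}r$, which equals the large-time limit $\lim_{t\to\infty}\mathbb{P}(X_t=0)$ of the mass at zero in the uncorrelated SABR model $\mathrm{d}X_t=Y_tX_t^\beta\mathrm{d}W_t$, $\mathrm{d}Y_t=\nu Y_t\mathrm{d}Z_t$ ($W,Z$ independent, origin absorbing). *)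

theory Defs
  imports "HOL-Analysis.Analysis"
begin

definition lower_gamma_reg :: "real \<Rightarrow> real \<Rightarrow> real" where
  "lower_gamma_reg v x = (LBINT u=0..x. u powr (v - 1) * exp (- u)) / Gamma v"

definition sabr_F :: "real \<Rightarrow> real \<Rightarrow> real \<Rightarrow> real" where
  "sabr_F x0 \<beta> r = 1 - lower_gamma_reg (1 / (2 * (1 - \<beta>)))
      (x0 powr (2 * (1 - \<beta>)) / (2 * r * (1 - \<beta>)^2))"

definition Pinf_integrand :: "real \<Rightarrow> real \<Rightarrow> real \<Rightarrow> real \<Rightarrow> real \<Rightarrow> real" where
  "Pinf_integrand x0 y0 \<nu> \<beta> r =
     y0 / (\<nu> * sqrt (2 * pi)) * sabr_F x0 \<beta> r * r powr (-3/2) * exp (- (y0^2 / (2 * \<nu>^2 * r)))"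

definition P_inf :: "real \<Rightarrow> real \<Rightarrow> real \<Rightarrow> real \<Rightarrow> real" where
  "P_inf x0 y0 \<nu> \<beta> = (LBINT r:{0<..}. Pinf_integrand x0 y0 \<nu> \<beta> r)"

definition Pn_integrand :: "real \<Rightarrow> real \<Rightarrow> real \<Rightarrow> real \<Rightarrow> nat \<Rightarrow> real \<Rightarrow> real" where
  "Pn_integrand x0 y0 \<nu> \<beta> n r =
     sabr_F x0 \<beta> r * (y0 / (\<nu> * r powr (3/2) * sqrt (2 * pi)))
       * (\<Sum>k=0..n. 1 / fact k * (- (y0^2 / (2 * \<nu>^2 * r))) ^ k)"

definition P_n :: "real \<Rightarrow> real \<Rightarrow> real \<Rightarrow> real \<Rightarrow> nat \<Rightarrow> real" where
  "P_n x0 y0 \<nu> \<beta> n = (LBINT r:{0<..}. Pn_integrand x0 y0 \<nu> \<beta> n r)"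

definition b_coef :: "real \<Rightarrow> real \<Rightarrow> real \<Rightarrow> real \<Rightarrow> nat \<Rightarrow> real" where
  "b_coef x0 y0 \<nu> \<beta> n =
     2 * y0 * (1 - \<beta>) / (Gamma (1 / (2 * (1 - \<beta>))) * \<nu> * sqrt pi * x0 powr (1 - \<beta>))
     * (y0^2 * (1 - \<beta>)^2 / (\<nu>^2 * x0 powr (2 * (1 - \<beta>)))) ^ n
     * Gamma (real n + 1 + \<beta> / (2 - 2 * \<beta>)) / (fact n * (1 + 2 * real n))"

end

theory Submission
  imports Defs
begin

text \<open>Let \<open>Q a s = 1 - lower_gamma_reg a s\<close>. For \<open>p > 1\<close> Tonelli's theorem gives
  \<open>\<integral>\<^sub>0\<^sup>\<infinity> Q a (c/r) r powr -p dr = c powr (1-p) \<Gamma>(a+p-1) / ((p-1) \<Gamma>(a))\<close>,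
  since \<open>\<Gamma>(a)\<close> times either side is the integral of \<open>u powr (a-1) e\<^sup>-\<^sup>u r powr -p\<close> over
  \<open>{(r,u). 0 < r, c < r u}\<close>. The integrand of \<open>P_n\<close> is a finite sum of such terms with
  \<open>p = k + 3/2\<close>, whose integrals are \<open>(-1)\<^sup>k b\<^sub>k\<close>. As
  \<open>|e\<^sup>-\<^sup>x - \<Sum>\<^sub>k\<^sub>\<le>\<^sub>n (-x)\<^sup>k/k!| \<le> x\<^sup>n\<^sup>+\<^sup>1/(n+1)!\<close> for \<open>x \<ge> 0\<close>, the integrand of
  \<open>P_inf - P_n\<close> is dominated by the absolute value of the next term, whose integral is \<open>b\<^sub>n\<^sub>+\<^sub>1\<close>.\<close>

definition gamma_kernel :: "real \<Rightarrow> real \<Rightarrow> real" where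
  "gamma_kernel a u = u powr (a - 1) / exp u"

lemma gamma_kernel_measurable [measurable]: "gamma_kernel a \<in> borel_measurable borel"
  unfolding gamma_kernel_def by measurable

lemma gamma_kernel_nonneg: "0 \<le> gamma_kernel a u"
  unfolding gamma_kernel_def by simp

lemma nn_integral_gamma_kernel:
  "a > 0 \<Longrightarrow> (\<integral>\<^sup>+u. ennreal (indicator {0..} u * gamma_kernel a u) \<partial>lborel) = ennreal (Gamma a)"
  using Gamma_conv_nn_integral_real[of a] unfolding gamma_kernel_def
  by (simp add: mult.assoc times_divide_eq_right)

lemma set_integrable_gamma_kernel:
  assumes "a > 0"
  shows "set_integrable lborel {0..} (gamma_kernel a)"
  unfolding set_integrable_def
  using nn_integral_gamma_kernel[OF assms] by (auto intro!: integrableI_nonneg simp: gamma_kernel_nonneg)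

lemma set_integral_gamma_kernel:
  assumes "a > 0"
  shows "(LINT u:{0..}|lborel. gamma_kernel a u) = Gamma a"
proof -
  have "ennreal (LINT u:{0..}|lborel. gamma_kernel a u) = ennreal (Gamma a)"
    using set_integrable_gamma_kernel[OF assms] nn_integral_gamma_kernel[OF assms]
    unfolding set_integrable_def set_lebesgue_integral_def
    by (subst nn_integral_eq_integral[symmetric]) (auto simp: gamma_kernel_nonneg)
  moreover have "0 \<le> (LINT u:{0..}|lborel. gamma_kernel a u)"
    unfolding set_lebesgue_integral_def by (auto intro!: integral_nonneg_AE simp: gamma_kernel_nonneg)
  ultimately show ?thesis using Gamma_real_pos[OF assms] by simp
qed

lemma Gamma_mult_upper_gamma_reg:
  assumes a: "a > 0" and s: "s > 0"
  shows "Gamma a * (1 - lower_gamma_reg a s) = (LINT u:{s<..}|lborel. gamma_kernel a u)"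
proof -
  have lower: "(LBINT u=0..s. u powr (a - 1) * exp (- u)) = (LINT u:{0..s}|lborel. gamma_kernel a u)"
    using interval_integral_Icc[of 0 s "\<lambda>u. u powr (a - 1) * exp (- u)"] s
    by (simp add: zero_ereal_def gamma_kernel_def exp_minus divide_inverse)
  have "{0..} = {0..s} \<union> {s<..}" using s by auto
  then have "Gamma a = (LINT u:{0..s} \<union> {s<..}|lborel. gamma_kernel a u)"
    using set_integral_gamma_kernel[OF a] by simp
  also have "\<dots> = (LINT u:{0..s}|lborel. gamma_kernel a u) + (LINT u:{s<..}|lborel. gamma_kernel a u)"
    using s by (intro set_integral_Un) (auto intro!: set_integrable_subset[OF set_integrable_gamma_kernel[OF a]])
  finally show ?thesis
    using Gamma_real_pos[OF a] unfolding lower_gamma_reg_def lower by (simp add: field_simps)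
qed

lemma nn_integral_upper_gamma_reg:
  assumes a: "a > 0" and s: "s > 0"
  shows "(\<integral>\<^sup>+u. ennreal (indicator {s<..} u * gamma_kernel a u) \<partial>lborel)
    = ennreal (Gamma a * (1 - lower_gamma_reg a s))"
proof -
  have "set_integrable lborel {s<..} (gamma_kernel a)"
    using s by (auto intro: set_integrable_subset[OF set_integrable_gamma_kernel[OF a]])
  then show ?thesis
    unfolding Gamma_mult_upper_gamma_reg[OF a s] set_integrable_def set_lebesgue_integral_def
    by (subst nn_integral_eq_integral) (auto simp: gamma_kernel_nonneg)
qed

lemma lower_gamma_reg_le_one:
  assumes a: "a > 0" and s: "s > 0"
  shows "lower_gamma_reg a s \<le> 1"
proof -
  have "0 \<le> (LINT u:{s<..}|lborel. gamma_kernel a u)"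
    unfolding set_lebesgue_integral_def by (auto intro!: integral_nonneg_AE simp: gamma_kernel_nonneg)
  then have "0 \<le> Gamma a * (1 - lower_gamma_reg a s)"
    using Gamma_mult_upper_gamma_reg[OF a s] by simp
  then have "0 \<le> 1 - lower_gamma_reg a s"
    using Gamma_real_pos[OF a] by (simp add: zero_le_mult_iff)
  then show ?thesis by simp
qed

lemma nn_integral_powr_tail:
  assumes t: "t > 0" and p: "p > 1"
  shows "(\<integral>\<^sup>+r. ennreal (indicator {t<..} r * r powr (-p)) \<partial>lborel) = ennreal (t powr (1 - p) / (p - 1))"
proof -
  have "-(t powr (1 - p) / (1 - p)) = t powr (1 - p) / (p - 1)"
    using p by (simp add: field_simps)
  then have "((\<lambda>x. x powr (-p)) has_integral t powr (1 - p) / (p - 1)) {t..}"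
    using has_integral_powr_to_inf[of "-p" t] p t by simp
  moreover have "AE r in lborel. ennreal (indicator {t<..} r * r powr (-p)) = ennreal (r powr (-p)) * indicator {t..} r"
    using AE_lborel_singleton[of t] by eventually_elim (auto simp: indicator_def)
  ultimately show ?thesis
    by (subst nn_integral_cong_AE) (auto intro: nn_integral_has_integral_lebesgue')
qed

definition upper_gamma_powr :: "real \<Rightarrow> real \<Rightarrow> real \<Rightarrow> real \<Rightarrow> real" where
  "upper_gamma_powr a c p r = indicator {0<..} r * (1 - lower_gamma_reg a (c / r)) * r powr (-p)"

lemma upper_gamma_powr_nonneg: "a > 0 \<Longrightarrow> c > 0 \<Longrightarrow> 0 \<le> upper_gamma_powr a c p r"
  unfolding upper_gamma_powr_def by (cases "r > 0") (auto simp: lower_gamma_reg_le_one)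

definition upper_gamma_powr_joint :: "real \<Rightarrow> real \<Rightarrow> real \<Rightarrow> real \<Rightarrow> real \<Rightarrow> ennreal" where
  "upper_gamma_powr_joint a c p r u = ennreal (if 0 < r \<and> c < r * u then gamma_kernel a u * r powr (-p) else 0)"

lemma upper_gamma_powr_joint_measurable [measurable]:
  "(\<lambda>(r, u). upper_gamma_powr_joint a c p r u) \<in> borel_measurable (lborel \<Otimes>\<^sub>M lborel)"
  unfolding upper_gamma_powr_joint_def by measurable

lemma nn_integral_upper_gamma_powr_joint_u:
  assumes a: "a > 0" and c: "c > 0"
  shows "(\<integral>\<^sup>+u. upper_gamma_powr_joint a c p r u \<partial>lborel) = ennreal (Gamma a * upper_gamma_powr a c p r)"
proof (cases "r > 0")
  case False
  then show ?thesis unfolding upper_gamma_powr_def upper_gamma_powr_joint_def by simp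
next
  case r: True
  have "(\<integral>\<^sup>+u. upper_gamma_powr_joint a c p r u \<partial>lborel)
      = (\<integral>\<^sup>+u. ennreal (indicator {c/r<..} u * gamma_kernel a u) * ennreal (r powr (-p)) \<partial>lborel)"
  proof (rule nn_integral_cong)
    fix u
    have "c / r < u \<longleftrightarrow> c < r * u" using r by (simp add: divide_less_eq mult.commute)
    then show "upper_gamma_powr_joint a c p r u
        = ennreal (indicator {c/r<..} u * gamma_kernel a u) * ennreal (r powr (-p))"
      unfolding upper_gamma_powr_joint_def using r
      by (auto simp: ennreal_mult'[symmetric] gamma_kernel_nonneg indicator_def)
  qed
  also have "\<dots> = (\<integral>\<^sup>+u. ennreal (indicator {c/r<..} u * gamma_kernel a u) \<partial>lborel) * ennreal (r powr (-p))"
    by (rule nn_integral_multc) measurable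
  also have "\<dots> = ennreal (Gamma a * upper_gamma_powr a c p r)"
    using a c r unfolding upper_gamma_powr_def
    by (simp add: nn_integral_upper_gamma_reg ennreal_mult''[symmetric] mult.assoc)
  finally show ?thesis .
qed

lemma nn_integral_upper_gamma_powr_joint_r:
  assumes a: "a > 0" and c: "c > 0" and p: "p > 1"
  shows "(\<integral>\<^sup>+r. upper_gamma_powr_joint a c p r u \<partial>lborel)
    = ennreal (c powr (1 - p) / (p - 1)) * ennreal (indicator {0..} u * gamma_kernel (a + p - 1) u)"
proof (cases "u > 0")
  case False
  then have "r * u \<le> 0" if "0 < r" for r
    using that by (simp add: mult_nonneg_nonpos)
  then have "upper_gamma_powr_joint a c p r u = 0" for r
    using c unfolding upper_gamma_powr_joint_def by force
  moreover have "indicator {0..} u * gamma_kernel (a + p - 1) u = 0"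
    using False a p by (cases "u = 0") (auto simp: gamma_kernel_def)
  ultimately show ?thesis by auto
next
  case u: True
  have "(\<integral>\<^sup>+r. upper_gamma_powr_joint a c p r u \<partial>lborel)
      = (\<integral>\<^sup>+r. ennreal (gamma_kernel a u) * ennreal (indicator {c/u<..} r * r powr (-p)) \<partial>lborel)"
  proof (rule nn_integral_cong)
    fix r
    have "c / u < r \<longleftrightarrow> c < r * u" using u by (simp add: divide_less_eq)
    moreover have "c / u < r \<Longrightarrow> 0 < r" using u c by (meson divide_pos_pos less_trans)
    ultimately show "upper_gamma_powr_joint a c p r u
        = ennreal (gamma_kernel a u) * ennreal (indicator {c/u<..} r * r powr (-p))"
      unfolding upper_gamma_powr_joint_def
      by (auto simp: ennreal_mult'[symmetric] gamma_kernel_nonneg indicator_def)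
  qed
  also have "\<dots> = ennreal (gamma_kernel a u) * ennreal ((c/u) powr (1 - p) / (p - 1))"
    using u c p by (subst nn_integral_cmult) (auto simp: nn_integral_powr_tail)
  also have "\<dots> = ennreal (gamma_kernel a u * ((c/u) powr (1 - p) / (p - 1)))"
    by (rule ennreal_mult'[symmetric]) (simp add: gamma_kernel_nonneg)
  also have "gamma_kernel a u * ((c/u) powr (1 - p) / (p - 1))
      = c powr (1 - p) / (p - 1) * (indicator {0..} u * gamma_kernel (a + p - 1) u)"
    using u c unfolding gamma_kernel_def
    by (simp add: powr_divide powr_minus_divide field_simps powr_add[symmetric] powr_diff)
      (simp add: power2_eq_square algebra_simps)
  also have "ennreal \<dots> = ennreal (c powr (1 - p) / (p - 1)) * ennreal (indicator {0..} u * gamma_kernel (a + p - 1) u)"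
    by (rule ennreal_mult') (use p in simp)
  finally show ?thesis .
qed

lemma upper_gamma_powr_measurable [measurable]:
  assumes a: "a > 0" and c: "c > 0"
  shows "upper_gamma_powr a c p \<in> borel_measurable borel"
proof -
  have "upper_gamma_powr a c p = (\<lambda>r. enn2real (\<integral>\<^sup>+u. upper_gamma_powr_joint a c p r u \<partial>lborel) / Gamma a)"
    using Gamma_real_pos[OF a] upper_gamma_powr_nonneg[OF a c]
    by (simp add: nn_integral_upper_gamma_powr_joint_u[OF a c])
  also have "\<dots> \<in> borel_measurable borel" by measurable
  finally show ?thesis .
qed

lemma nn_integral_upper_gamma_powr:
  assumes a: "a > 0" and c: "c > 0" and p: "p > 1"
  shows "(\<integral>\<^sup>+r. ennreal (upper_gamma_powr a c p r) \<partial>lborel)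
    = ennreal (c powr (1 - p) / (p - 1) * Gamma (a + p - 1) / Gamma a)"
proof -
  have ga: "Gamma a > 0" using Gamma_real_pos[OF a] .
  define C where "C = c powr (1 - p) / (p - 1)"
  have "ennreal (Gamma a) * (\<integral>\<^sup>+r. ennreal (upper_gamma_powr a c p r) \<partial>lborel)
      = (\<integral>\<^sup>+r. ennreal (Gamma a) * ennreal (upper_gamma_powr a c p r) \<partial>lborel)"
    by (rule nn_integral_cmult[symmetric]) (use a c in measurable)
  also have "\<dots> = (\<integral>\<^sup>+r. (\<integral>\<^sup>+u. upper_gamma_powr_joint a c p r u \<partial>lborel) \<partial>lborel)"
    using ga by (intro nn_integral_cong)
      (simp add: nn_integral_upper_gamma_powr_joint_u[OF a c] ennreal_mult' upper_gamma_powr_nonneg[OF a c])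
  also have "\<dots> = (\<integral>\<^sup>+u. (\<integral>\<^sup>+r. upper_gamma_powr_joint a c p r u \<partial>lborel) \<partial>lborel)"
    by (rule lborel_pair.Fubini'[symmetric]) measurable
  also have "\<dots> = (\<integral>\<^sup>+u. ennreal C * ennreal (indicator {0..} u * gamma_kernel (a + p - 1) u) \<partial>lborel)"
    by (simp only: nn_integral_upper_gamma_powr_joint_r[OF a c p] C_def)
  also have "\<dots> = ennreal C * ennreal (Gamma (a + p - 1))"
    using a p by (subst nn_integral_cmult) (auto simp: nn_integral_gamma_kernel)
  also have "\<dots> = ennreal (Gamma a) * ennreal (C * Gamma (a + p - 1) / Gamma a)"
    using ga p by (simp add: C_def ennreal_mult'[symmetric])
  finally show ?thesis
    using ga unfolding ennreal_mult_cancel_left C_def by simp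
qed

lemma has_bochner_integral_upper_gamma_powr:
  assumes a: "a > 0" and c: "c > 0" and p: "p > 1"
  shows "has_bochner_integral lborel (upper_gamma_powr a c p)
    (c powr (1 - p) / (p - 1) * Gamma (a + p - 1) / Gamma a)"
proof (rule has_bochner_integral_nn_integral)
  show "0 \<le> c powr (1 - p) / (p - 1) * Gamma (a + p - 1) / Gamma a"
    using a p Gamma_real_pos[of a] Gamma_real_pos[of "a + p - 1"] by simp
qed (use upper_gamma_powr_measurable[OF a c] upper_gamma_powr_nonneg[OF a c]
    nn_integral_upper_gamma_powr[OF a c p] in auto)

lemma abs_exp_minus_taylor_le:
  fixes x :: real
  assumes x: "x \<ge> 0"
  shows "\<bar>exp (- x) - (\<Sum>k=0..n. 1 / fact k * (- x) ^ k)\<bar> \<le> x ^ (n + 1) / fact (n + 1)"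
proof (cases "x = 0")
  case True
  have "(\<Sum>k=0..n. 1 / fact k * (0::real) ^ k) = 1"
    by (induction n) (auto simp: sum.atLeast0_atMost_Suc)
  then show ?thesis using True by simp
next
  case False
  then obtain t where t: "- x < t" "t < 0"
    and e: "exp (- x) = (\<Sum>m<Suc n. exp 0 / fact m * (- x) ^ m) + exp t / fact (Suc n) * (- x) ^ Suc n"
    using Maclaurin_minus[of "- x" "Suc n" "\<lambda>_. exp" exp] x by (auto intro: DERIV_exp)
  have "\<bar>exp (- x) - (\<Sum>k=0..n. 1 / fact k * (- x) ^ k)\<bar> = exp t / fact (Suc n) * x ^ Suc n"
    unfolding e using x by (simp add: lessThan_Suc_atMost atLeast0AtMost abs_mult power_abs)
  also have "\<dots> \<le> 1 / fact (Suc n) * x ^ Suc n"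
    using t x by (intro mult_right_mono divide_right_mono) auto
  finally show ?thesis by simp
qed

locale sabr_parameters =
  fixes x0 y0 \<nu> \<beta> :: real
  assumes x0_pos: "x0 > 0" and y0_pos: "y0 > 0" and nu_pos: "\<nu> > 0" and beta_less_1: "\<beta> < 1"
begin

definition gamma_shape :: real where
  "gamma_shape = 1 / (2 * (1 - \<beta>))"

definition gamma_scale :: real where
  "gamma_scale = x0 powr (2 * (1 - \<beta>)) / (2 * (1 - \<beta>)^2)"

text \<open>The \<open>k\<close>-th term of the truncated exponential in \<open>Pn_integrand\<close> is
  \<open>term_coef k * r powr -(k + 3/2)\<close>, times the factor \<open>sabr_F\<close>.\<close>
definition term_coef :: "nat \<Rightarrow> real" where
  "term_coef k = y0 / (\<nu> * sqrt (2 * pi)) * (1 / fact k * (- (y0^2 / (2 * \<nu>^2))) ^ k)"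

lemma gamma_shape_pos: "gamma_shape > 0"
  using beta_less_1 by (simp add: gamma_shape_def)

lemma gamma_scale_pos: "gamma_scale > 0"
  using x0_pos beta_less_1 by (simp add: gamma_scale_def)

lemma sabr_F_eq: "sabr_F x0 \<beta> r = 1 - lower_gamma_reg gamma_shape (gamma_scale / r)"
proof -
  have "x0 powr (2 * (1 - \<beta>)) / (2 * r * (1 - \<beta>)^2) = gamma_scale / r"
    unfolding gamma_scale_def by (simp add: field_simps)
  then show ?thesis unfolding sabr_F_def gamma_shape_def by simp
qed

lemma term_coef_powr:
  assumes r: "r > 0"
  shows "y0 / (\<nu> * r powr (3/2) * sqrt (2 * pi)) * (1 / fact k * (- (y0^2 / (2 * \<nu>^2 * r))) ^ k)
    = term_coef k * r powr (- (real k + 3/2))"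
proof -
  have rp: "r powr (- (real k + 3/2)) = inverse (r powr (3/2) * r ^ k)"
    using r by (simp only: powr_minus powr_add powr_realpow[OF r] mult.commute)
  have q: "(- (y0^2 / (2 * \<nu>^2 * r))) ^ k = (- (y0^2 / (2 * \<nu>^2))) ^ k / r ^ k"
    using r by (simp add: power_divide[symmetric] field_simps)
  show ?thesis
    unfolding term_coef_def rp q using r nu_pos by (simp add: field_simps)
qed

lemma Pn_integrand_eq_sum:
  "indicator {0<..} r * Pn_integrand x0 y0 \<nu> \<beta> n r
    = (\<Sum>k=0..n. term_coef k * upper_gamma_powr gamma_shape gamma_scale (real k + 3/2) r)"
proof (cases "r > 0")
  case r: True
  have "Pn_integrand x0 y0 \<nu> \<beta> n r = (\<Sum>k=0..n. sabr_F x0 \<beta> r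
      * (y0 / (\<nu> * r powr (3/2) * sqrt (2 * pi)) * (1 / fact k * (- (y0^2 / (2 * \<nu>^2 * r))) ^ k)))"
    unfolding Pn_integrand_def by (simp add: sum_distrib_left mult.assoc)
  also have "\<dots> = (\<Sum>k=0..n. sabr_F x0 \<beta> r * (term_coef k * r powr (- (real k + 3/2))))"
    by (simp only: term_coef_powr[OF r])
  finally show ?thesis
    using r by (simp add: upper_gamma_powr_def sabr_F_eq mult_ac)
qed (simp add: upper_gamma_powr_def)

lemma Pinf_integrand_eq:
  "indicator {0<..} r * Pinf_integrand x0 y0 \<nu> \<beta> r
    = term_coef 0 * upper_gamma_powr gamma_shape gamma_scale (3/2) r * exp (- (y0^2 / (2 * \<nu>^2 * r)))"
  by (cases "r > 0") (simp_all add: upper_gamma_powr_def Pinf_integrand_def term_coef_def sabr_F_eq)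

lemma term_coef_mult_mellin:
  "term_coef k * (gamma_scale powr (1 - (real k + 3/2)) / (real k + 3/2 - 1)
      * Gamma (gamma_shape + (real k + 3/2) - 1) / Gamma gamma_shape)
    = (-1)^k * b_coef x0 y0 \<nu> \<beta> k"
proof -
  define X where "X = x0 powr (1 - \<beta>)"
  define B where "B = 1 - \<beta>"
  have X: "X > 0" and B: "B > 0" using x0_pos beta_less_1 by (simp_all add: X_def B_def)
  have X2: "x0 powr (2 * (1 - \<beta>)) = X^2"
    unfolding X_def using x0_pos by (simp add: powr_realpow[symmetric] powr_powr mult.commute)
  have c: "gamma_scale = X^2 / (2 * B^2)"
    unfolding gamma_scale_def X2 B_def ..
  have "1 - (real k + 3/2) = - (real k + 1/2)" by simp
  then have "gamma_scale powr (1 - (real k + 3/2)) = inverse (gamma_scale powr real k * gamma_scale powr (1/2))"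
    by (simp only: powr_minus powr_add)
  also have "\<dots> = inverse gamma_scale ^ k * inverse (sqrt gamma_scale)"
    using gamma_scale_pos by (simp add: powr_realpow powr_half_sqrt power_inverse)
  also have "\<dots> = (2 * B^2 / X^2) ^ k * (sqrt 2 * B / X)"
    using X B unfolding c by (simp add: real_sqrt_divide real_sqrt_mult)
  finally have scale_powr: "gamma_scale powr (1 - (real k + 3/2)) = (2 * B^2 / X^2) ^ k * (sqrt 2 * B / X)" .
  have shift: "gamma_shape + (real k + 3/2) - 1 = real k + 1 + \<beta> / (2 - 2 * \<beta>)"
    unfolding gamma_shape_def using beta_less_1 by (simp add: field_simps)
  define U where "U = (- (y0^2 / (2 * \<nu>^2))) ^ k"
  define V where "V = (2 * B^2 / X^2) ^ k"
  define W where "W = (y0^2 * B^2 / (\<nu>^2 * X^2)) ^ k"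
  define G where "G = Gamma (real k + 1 + \<beta> / (2 - 2 * \<beta>))"
  have "- (y0^2 / (2 * \<nu>^2)) * (2 * B^2 / X^2) = - (y0^2 * B^2 / (\<nu>^2 * X^2))"
    using nu_pos X by (simp add: field_simps)
  then have UV: "U * V = (-1)^k * W"
    unfolding U_def V_def W_def by (metis power_minus power_mult_distrib)
  have lhs: "term_coef k * (gamma_scale powr (1 - (real k + 3/2)) / (real k + 3/2 - 1)
      * Gamma (gamma_shape + (real k + 3/2) - 1) / Gamma gamma_shape)
    = y0 / (\<nu> * (sqrt 2 * sqrt pi)) * (1 / fact k * U) * (V * (sqrt 2 * B / X) / (real k + 3/2 - 1) * G / Gamma gamma_shape)"
    unfolding term_coef_def scale_powr shift U_def V_def G_def by (simp add: real_sqrt_mult)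
  have rhs: "b_coef x0 y0 \<nu> \<beta> k = 2 * y0 * B / (Gamma gamma_shape * \<nu> * sqrt pi * X) * W * G / (fact k * (1 + 2 * real k))"
    unfolding b_coef_def gamma_shape_def[symmetric] X2 X_def[symmetric]
    unfolding B_def[symmetric] W_def[symmetric] G_def[symmetric] ..
  have "real k + 3/2 - 1 = (1 + 2 * real k) / 2" by simp
  then show ?thesis
    unfolding lhs rhs using X B nu_pos UV Gamma_real_pos[OF gamma_shape_pos] by (simp add: field_simps)
qed

lemma has_bochner_integral_term:
  "has_bochner_integral lborel (\<lambda>r. term_coef k * upper_gamma_powr gamma_shape gamma_scale (real k + 3/2) r)
    ((-1)^k * b_coef x0 y0 \<nu> \<beta> k)"
  unfolding term_coef_mult_mellin[symmetric]
  by (intro has_bochner_integral_mult_right has_bochner_integral_upper_gamma_powr gamma_shape_pos gamma_scale_pos) simp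

lemma abs_term_coef: "\<bar>term_coef k\<bar> = (-1)^k * term_coef k"
proof -
  have "term_coef k = (-1)^k * (y0 / (\<nu> * sqrt (2 * pi)) * (1 / fact k * (y0^2 / (2 * \<nu>^2)) ^ k))"
    unfolding term_coef_def by (subst power_minus) (simp add: mult_ac)
  then show ?thesis
    using y0_pos nu_pos by (simp add: abs_mult mult.assoc[symmetric] minus_one_mult_self)
qed

lemma has_bochner_integral_abs_term:
  "has_bochner_integral lborel (\<lambda>r. \<bar>term_coef k\<bar> * upper_gamma_powr gamma_shape gamma_scale (real k + 3/2) r)
    (b_coef x0 y0 \<nu> \<beta> k)"
  using has_bochner_integral_mult_right[OF has_bochner_integral_term, of "(-1)^k" k]
  by (simp add: abs_term_coef mult.assoc[symmetric] minus_one_mult_self)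

lemma has_bochner_integral_Pn_integrand:
  "has_bochner_integral lborel (\<lambda>r. indicator {0<..} r * Pn_integrand x0 y0 \<nu> \<beta> n r)
    (\<Sum>k=0..n. (-1)^k * b_coef x0 y0 \<nu> \<beta> k)"
  unfolding Pn_integrand_eq_sum by (intro has_bochner_integral_sum has_bochner_integral_term)

lemma set_integrable_Pn_integrand: "set_integrable lborel {0<..} (Pn_integrand x0 y0 \<nu> \<beta> n)"
  using has_bochner_integral_Pn_integrand unfolding set_integrable_def
  by (simp add: has_bochner_integral_iff)

lemma P_n_eq_alternating_sum: "P_n x0 y0 \<nu> \<beta> n = (\<Sum>k=0..n. (-1)^k * b_coef x0 y0 \<nu> \<beta> k)"
  using has_bochner_integral_Pn_integrand unfolding P_n_def set_lebesgue_integral_def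
  by (simp add: has_bochner_integral_iff)

lemma set_integrable_Pinf_integrand: "set_integrable lborel {0<..} (Pinf_integrand x0 y0 \<nu> \<beta>)"
  unfolding set_integrable_def
proof (rule Bochner_Integration.integrable_bound)
  show "integrable lborel (\<lambda>r. \<bar>term_coef 0\<bar> * upper_gamma_powr gamma_shape gamma_scale (real 0 + 3/2) r)"
    by (rule integrable.intros[OF has_bochner_integral_abs_term])
  show "(\<lambda>r. indicator {0<..} r *\<^sub>R Pinf_integrand x0 y0 \<nu> \<beta> r) \<in> borel_measurable lborel"
    using upper_gamma_powr_measurable[OF gamma_shape_pos gamma_scale_pos] by (simp add: Pinf_integrand_eq)
  have "norm (indicator {0<..} r *\<^sub>R Pinf_integrand x0 y0 \<nu> \<beta> r)
      \<le> norm (\<bar>term_coef 0\<bar> * upper_gamma_powr gamma_shape gamma_scale (real 0 + 3/2) r)" for r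
  proof (cases "r > 0")
    case True
    then have "exp (- (y0^2 / (2 * \<nu>^2 * r))) \<le> 1"
      using nu_pos by simp
    then show ?thesis
      unfolding real_scaleR_def Pinf_integrand_eq by (simp add: abs_mult mult_left_le)
  qed (simp add: upper_gamma_powr_def)
  then show "AE r in lborel. norm (indicator {0<..} r *\<^sub>R Pinf_integrand x0 y0 \<nu> \<beta> r)
      \<le> norm (\<bar>term_coef 0\<bar> * upper_gamma_powr gamma_shape gamma_scale (real 0 + 3/2) r)"
    by simp
qed

lemma abs_Pinf_minus_Pn_integrand_le:
  "\<bar>indicator {0<..} r * Pinf_integrand x0 y0 \<nu> \<beta> r - indicator {0<..} r * Pn_integrand x0 y0 \<nu> \<beta> n r\<bar>
    \<le> \<bar>term_coef (n + 1)\<bar> * upper_gamma_powr gamma_shape gamma_scale (real (n + 1) + 3/2) r"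
proof (cases "r > 0")
  case r: True
  define x where "x = y0^2 / (2 * \<nu>^2 * r)"
  define T where "T = y0 / (\<nu> * r powr (3/2) * sqrt (2 * pi))"
  have x: "x \<ge> 0" and T: "T \<ge> 0"
    using r y0_pos nu_pos by (simp_all add: x_def T_def)
  have F: "sabr_F x0 \<beta> r \<ge> 0"
    unfolding sabr_F_eq using lower_gamma_reg_le_one[OF gamma_shape_pos] gamma_scale_pos r by simp
  have r_powr: "r powr (-3/2) = 1 / r powr (3/2)"
    using powr_minus_divide[of r "3/2"] by simp
  have "Pinf_integrand x0 y0 \<nu> \<beta> r - Pn_integrand x0 y0 \<nu> \<beta> n r
      = sabr_F x0 \<beta> r * T * (exp (- x) - (\<Sum>k=0..n. 1 / fact k * (- x) ^ k))"
    unfolding Pinf_integrand_def Pn_integrand_def r_powr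
    by (simp add: T_def x_def right_diff_distrib mult_ac)
  then have "\<bar>Pinf_integrand x0 y0 \<nu> \<beta> r - Pn_integrand x0 y0 \<nu> \<beta> n r\<bar>
      = sabr_F x0 \<beta> r * T * \<bar>exp (- x) - (\<Sum>k=0..n. 1 / fact k * (- x) ^ k)\<bar>"
    using F T by (simp add: abs_mult)
  also have "\<dots> \<le> sabr_F x0 \<beta> r * T * (x ^ (n + 1) / fact (n + 1))"
    using F T abs_exp_minus_taylor_le[OF x] by (intro mult_left_mono) auto
  also have "\<dots> = \<bar>sabr_F x0 \<beta> r * (T * (1 / fact (n + 1) * (- x) ^ (n + 1)))\<bar>"
    using F T x by (simp add: abs_mult power_abs)
  also have "\<dots> = \<bar>term_coef (n + 1)\<bar> * upper_gamma_powr gamma_shape gamma_scale (real (n + 1) + 3/2) r"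
    unfolding T_def x_def term_coef_powr[OF r]
    using r F by (simp add: upper_gamma_powr_def sabr_F_eq abs_mult)
  finally show ?thesis using r by simp
qed (simp add: upper_gamma_powr_def)

lemma abs_P_inf_minus_P_n_le: "\<bar>P_inf x0 y0 \<nu> \<beta> - P_n x0 y0 \<nu> \<beta> n\<bar> \<le> b_coef x0 y0 \<nu> \<beta> (n + 1)"
proof -
  let ?err = "\<lambda>r. indicator {0<..} r * Pinf_integrand x0 y0 \<nu> \<beta> r - indicator {0<..} r * Pn_integrand x0 y0 \<nu> \<beta> n r"
  let ?bound = "\<lambda>r. \<bar>term_coef (n + 1)\<bar> * upper_gamma_powr gamma_shape gamma_scale (real (n + 1) + 3/2) r"
  have integrable: "integrable lborel ?err"
    using set_integrable_Pinf_integrand set_integrable_Pn_integrand unfolding set_integrable_def by simp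
  have "P_inf x0 y0 \<nu> \<beta> - P_n x0 y0 \<nu> \<beta> n = integral\<^sup>L lborel ?err"
    using set_integrable_Pinf_integrand set_integrable_Pn_integrand
    unfolding P_inf_def P_n_def set_lebesgue_integral_def set_integrable_def by simp
  moreover have "\<bar>integral\<^sup>L lborel ?err\<bar> \<le> integral\<^sup>L lborel ?bound"
    using integrable integrable.intros[OF has_bochner_integral_abs_term] abs_Pinf_minus_Pn_integrand_le
    by (rule integral_abs_bound_integral)
  moreover have "integral\<^sup>L lborel ?bound = b_coef x0 y0 \<nu> \<beta> (n + 1)"
    by (rule has_bochner_integral_integral_eq[OF has_bochner_integral_abs_term])
  ultimately show ?thesis by simp
qed

lemma P_n_0:
  "P_n x0 y0 \<nu> \<beta> 0 = 2 * Gamma (1 + \<beta> / (2 - 2 * \<beta>)) / Gamma (1 / (2 - 2 * \<beta>))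
    * (y0 * (1 - \<beta>) / (\<nu> * sqrt pi * x0 powr (1 - \<beta>)))"
proof -
  have "2 * (1 - \<beta>) = 2 - 2 * \<beta>" by simp
  then show ?thesis unfolding P_n_eq_alternating_sum b_coef_def by (simp add: mult_ac)
qed

end

theorem mainTheorem7:
  fixes x0 y0 \<nu> \<beta> :: real
  assumes "x0 > 0" and "y0 > 0" and "\<nu> > 0" and "0 \<le> \<beta>" and "\<beta> < 1"
  shows "(\<forall>n. set_integrable lborel {0<..} (Pn_integrand x0 y0 \<nu> \<beta> n))
    \<and> (\<forall>n. P_n x0 y0 \<nu> \<beta> n = (\<Sum>k=0..n. (-1)^k * b_coef x0 y0 \<nu> \<beta> k))
    \<and> (\<forall>n. \<bar>P_inf x0 y0 \<nu> \<beta> - P_n x0 y0 \<nu> \<beta> n\<bar> \<le> b_coef x0 y0 \<nu> \<beta> (n + 1))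
    \<and> P_n x0 y0 \<nu> \<beta> 0 =
        2 * Gamma (1 + \<beta> / (2 - 2 * \<beta>)) / Gamma (1 / (2 - 2 * \<beta>))
        * (y0 * (1 - \<beta>) / (\<nu> * sqrt pi * x0 powr (1 - \<beta>)))"
proof -
  interpret sabr_parameters x0 y0 \<nu> \<beta>
    using assms by unfold_locales simp_all
  show ?thesis
    using set_integrable_Pn_integrand P_n_eq_alternating_sum abs_P_inf_minus_P_n_le P_n_0 by blast
qed

end
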